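(* Let $A$ and $B$ be probabilistic models, let $\phi:A\to B$ be an embedding, and let $\psi:B\to A$ be a morphism with $\psi\circ\phi=\mathrm{id}_{A}$ (the identity on $X(A)$). Then $\psi$ is test-preserving, i.e. $\psi(F)\in\mathcal{M}(A)$ for every $F\in\mathcal{M}(B)$.
   Context: A test space is a collection $\mathcal{M}$ of nonempty sets ("tests") that is irredundant ($E,F\in\mathcal{M}$, $E\subseteq F$ imply $E=F$); $X=\bigcup\mathcal{M}$ is its outcome set. A probability weight is a function $\alpha:X\to[0,1]$ with $\sum_{x\in E}\alpha(x)=1$ for all $E\in\mathcal{M}$. A probabilistic model $A$ is a pair $(\mathcal{M}(A),\Omega(A))$ with $\mathcal{M}(A)$ a test space with outcome set $X(A)$ and $\Omega(A)$ a set of probability weights (states); standing assumptions: $\Omega(A)$ is convex, closed under uniform limits, and positive (for every $x\in X(A)$ there is $\alpha\in\Omega(A)$ with $\alpha(x)>0$). An event is a subset of some test; $\alpha(a)=\sum_{x\in a}\alpha(x)$. Events $a,b$ are orthogonal ($a\perp b$) if disjoint with $a\cup b$ an event; complements if $a\perp b$ and $a\cup b$ is a test; perspective ($a\sim b$) if they have a common complement; for outcomes, $x\perp y$ means $\{x\}\perp\{y\}$. A morphism $\phi:A\to B$ is a map $\phi:X(A)\to X(B)$ such that (i) $x\perp y\Rightarrow\phi(x)\perp\phi(y)$; (ii) $\phi(a)$ is an event of $B$ for every event $a$ of $A$; (iii) $a\sim b\Rightarrow\phi(a)\sim\phi(b)$; (iv) for every $\beta\in\Omega(B)$ there are $\alpha\in\Omega(A)$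 and $t\ge0$ with $\beta(\phi(x))=t\alpha(x)$ for all $x\in X(A)$. A morphism is test-preserving if it maps tests to tests, and an embedding if it is test-preserving and injective. *)

theory Defs
  imports "HOL-Analysis.Analysis"
begin

definition test_space :: "'a set set \<Rightarrow> bool" where
  "test_space M \<longleftrightarrow> (\<forall>E\<in>M. E \<noteq> {}) \<and> (\<forall>E\<in>M. \<forall>F\<in>M. E \<subseteq> F \<longrightarrow> E = F)"

definition outcomes :: "'a set set \<Rightarrow> 'a set" where
  "outcomes M = \<Union>M"

definition prob_weight :: "'a set set \<Rightarrow> ('a \<Rightarrow> real) \<Rightarrow> bool" where
  "prob_weight M \<alpha> \<longleftrightarrow> (\<forall>x\<in>outcomes M. 0 \<le> \<alpha> x \<and> \<alpha> x \<le> 1) \<and> (\<forall>E\<in>M. (\<alpha> has_sum 1) E)"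

type_synonym 'a model = "'a set set \<times> ('a \<Rightarrow> real) set"

definition tests :: "'a model \<Rightarrow> 'a set set" where "tests A = fst A"
definition states :: "'a model \<Rightarrow> ('a \<Rightarrow> real) set" where "states A = snd A"
definition X :: "'a model \<Rightarrow> 'a set" where "X A = outcomes (tests A)"

definition prob_model :: "'a model \<Rightarrow> bool" where
  "prob_model A \<longleftrightarrow>
     test_space (tests A) \<and>
     (\<forall>\<alpha>\<in>states A. prob_weight (tests A) \<alpha>) \<and>
     \<comment> \<open>convex\<close>
     (\<forall>\<alpha>\<in>states A. \<forall>\<beta>\<in>states A. \<forall>t::real. 0 \<le> t \<and> t \<le> 1 \<longrightarrow>
        (\<lambda>x. t * \<alpha> x + (1 - t) * \<beta> x) \<in> states A) \<and>
     \<comment> \<open>closed under uniform limits (on the outcome set)\<close>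
     (\<forall>f g. (\<forall>n. f n \<in> states A) \<and> uniform_limit (X A) f g sequentially
        \<and> prob_weight (tests A) g \<longrightarrow> (\<exists>\<alpha>\<in>states A. \<forall>x\<in>X A. \<alpha> x = g x)) \<and>
     \<comment> \<open>positive\<close>
     (\<forall>x\<in>X A. \<exists>\<alpha>\<in>states A. \<alpha> x > 0)"

definition event :: "'a model \<Rightarrow> 'a set \<Rightarrow> bool" where
  "event A a \<longleftrightarrow> (\<exists>E\<in>tests A. a \<subseteq> E)"

definition orth :: "'a model \<Rightarrow> 'a set \<Rightarrow> 'a set \<Rightarrow> bool" where
  "orth A a b \<longleftrightarrow> a \<inter> b = {} \<and> event A (a \<union> b)"

definition complements :: "'a model \<Rightarrow> 'a set \<Rightarrow> 'a set \<Rightarrow> bool" where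
  "complements A a b \<longleftrightarrow> orth A a b \<and> a \<union> b \<in> tests A"

definition perspective :: "'a model \<Rightarrow> 'a set \<Rightarrow> 'a set \<Rightarrow> bool" where
  "perspective A a b \<longleftrightarrow> (\<exists>c. complements A a c \<and> complements A b c)"

definition orth_out :: "'a model \<Rightarrow> 'a \<Rightarrow> 'a \<Rightarrow> bool" where
  "orth_out A x y \<longleftrightarrow> orth A {x} {y}"

definition morphism :: "'a model \<Rightarrow> 'b model \<Rightarrow> ('a \<Rightarrow> 'b) \<Rightarrow> bool" where
  "morphism A B \<phi> \<longleftrightarrow>
     (\<forall>x\<in>X A. \<forall>y\<in>X A. orth_out A x y \<longrightarrow> orth_out B (\<phi> x) (\<phi> y)) \<and>
     (\<forall>a. event A a \<longrightarrow> event B (\<phi> ` a)) \<and>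
     (\<forall>a b. event A a \<and> event A b \<and> perspective A a b \<longrightarrow> perspective B (\<phi> ` a) (\<phi> ` b)) \<and>
     (\<forall>\<beta>\<in>states B. \<exists>\<alpha>\<in>states A. \<exists>t::real. t \<ge> 0 \<and> (\<forall>x\<in>X A. \<beta> (\<phi> x) = t * \<alpha> x))"

definition test_preserving :: "'a model \<Rightarrow> 'b model \<Rightarrow> ('a \<Rightarrow> 'b) \<Rightarrow> bool" where
  "test_preserving A B \<phi> \<longleftrightarrow> morphism A B \<phi> \<and> (\<forall>E\<in>tests A. \<phi> ` E \<in> tests B)"

definition embedding :: "'a model \<Rightarrow> 'b model \<Rightarrow> ('a \<Rightarrow> 'b) \<Rightarrow> bool" where
  "embedding A B \<phi> \<longleftrightarrow> test_preserving A B \<phi> \<and> inj_on \<phi> (X A)"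

end

theory Submission
  imports Defs
begin

text \<open>A state \<alpha> of A pulls back along \<psi> to a multiple t \<beta> of a state \<beta> of B, so \<alpha> \<circ> \<psi> sums to
  t over every test of B. On a test \<phi>(E) with E a test of A this sum is the sum of \<alpha> over E,
  because \<psi> \<circ> \<phi> is the identity; hence t = 1. As \<psi> separates the outcomes of a test F of B,
  every state of A sums to 1 over \<psi>(F). Finally \<psi>(F) is an event, so it lies in a test E' of A,
  and positivity of the states rules out any outcome of E' outside \<psi>(F).\<close>

lemma test_subset_X: "E \<in> tests A \<Longrightarrow> E \<subseteq> X A"
  by (auto simp: X_def outcomes_def)

lemma event_test: "E \<in> tests A \<Longrightarrow> event A E"
  unfolding event_def by blast

lemma prob_model_state_has_sum:
  assumes "prob_model A" "\<alpha> \<in> states A" "E \<in> tests A"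
  shows "(\<alpha> has_sum 1) E"
  using assms unfolding prob_model_def prob_weight_def by blast

lemma prob_model_state_nonneg:
  assumes "prob_model A" "\<alpha> \<in> states A" "x \<in> X A"
  shows "0 \<le> \<alpha> x"
  using assms unfolding prob_model_def prob_weight_def X_def by blast

lemma morphism_inj_on_test:
  assumes "morphism A B \<phi>" "E \<in> tests A"
  shows "inj_on \<phi> E"
proof (rule inj_onI, rule ccontr)
  fix x y assume xy: "x \<in> E" "y \<in> E" "\<phi> x = \<phi> y" "x \<noteq> y"
  have "orth_out A x y"
    using xy assms(2) unfolding orth_out_def orth_def event_def by auto
  then have "orth_out B (\<phi> x) (\<phi> y)"
    using assms xy test_subset_X unfolding morphism_def by blast
  then show False
    using xy unfolding orth_out_def orth_def by auto
qed

lemma morphism_image_test_subset_test: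
  assumes "morphism A B \<phi>" "E \<in> tests A"
  obtains F where "F \<in> tests B" "\<phi> ` E \<subseteq> F"
proof -
  have "event B (\<phi> ` E)"
    using assms event_test unfolding morphism_def by blast
  then show thesis
    using that unfolding event_def by blast
qed

lemma morphism_pullback_state_has_sum:
  assumes "prob_model A" "morphism A B \<phi>" "\<beta> \<in> states B"
  obtains t where "\<And>E. E \<in> tests A \<Longrightarrow> ((\<beta> \<circ> \<phi>) has_sum t) E"
proof -
  obtain \<alpha> t where \<alpha>: "\<alpha> \<in> states A" and scale: "\<forall>x\<in>X A. \<beta> (\<phi> x) = t * \<alpha> x"
    using assms(2,3) unfolding morphism_def by blast
  have "((\<beta> \<circ> \<phi>) has_sum t) E" if E: "E \<in> tests A" for E
  proof -
    have "((\<lambda>x. t * \<alpha> x) has_sum t) E"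
      using has_sum_cmult_right[OF prob_model_state_has_sum[OF assms(1) \<alpha> E], of t] by simp
    moreover have "((\<beta> \<circ> \<phi>) has_sum t) E \<longleftrightarrow> ((\<lambda>x. t * \<alpha> x) has_sum t) E"
      by (rule has_sum_cong) (use scale test_subset_X[OF E] in auto)
    ultimately show ?thesis
      by simp
  qed
  then show thesis using that by blast
qed

lemma left_inverse_pullback_state_has_sum_one:
  assumes A: "prob_model A" and "prob_model B" and \<psi>: "morphism B A \<psi>"
    and E: "E \<in> tests A" "\<phi> ` E \<in> tests B" and left_inv: "\<forall>x\<in>E. \<psi> (\<phi> x) = x"
    and \<alpha>: "\<alpha> \<in> states A" and F: "F \<in> tests B"
  shows "((\<alpha> \<circ> \<psi>) has_sum 1) F"
proof -
  obtain t where t: "\<And>G. G \<in> tests B \<Longrightarrow> ((\<alpha> \<circ> \<psi>) has_sum t) G"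
    using morphism_pullback_state_has_sum[OF \<open>prob_model B\<close> \<psi> \<alpha>] by blast
  have "inj_on \<phi> E"
    by (rule inj_on_inverseI[where g = \<psi>]) (use left_inv in auto)
  then have "((\<alpha> \<circ> \<psi> \<circ> \<phi>) has_sum t) E"
    using t[OF E(2)] has_sum_reindex by blast
  moreover have "((\<alpha> \<circ> \<psi> \<circ> \<phi>) has_sum t) E \<longleftrightarrow> (\<alpha> has_sum t) E"
    by (rule has_sum_cong) (use left_inv in auto)
  ultimately have "(\<alpha> has_sum t) E"
    by simp
  then have "t = 1"
    using has_sum_unique prob_model_state_has_sum[OF A \<alpha> E(1)] by blast
  then show ?thesis
    using t[OF F] by simp
qed

lemma subset_test_eq_if_states_sum_one:
  assumes A: "prob_model A" and E: "E \<in> tests A" and "a \<subseteq> E"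
    and sum_one: "\<And>\<alpha>. \<alpha> \<in> states A \<Longrightarrow> (\<alpha> has_sum 1) a"
  shows "a = E"
proof (rule ccontr)
  assume "a \<noteq> E"
  then obtain x where x: "x \<in> E" "x \<notin> a"
    using \<open>a \<subseteq> E\<close> by blast
  obtain \<alpha> where \<alpha>: "\<alpha> \<in> states A" "\<alpha> x > 0"
    using A x(1) test_subset_X[OF E] unfolding prob_model_def by blast
  have "(\<alpha> has_sum (\<alpha> x + 1)) (insert x a)"
    using has_sum_insert[OF x(2) sum_one[OF \<alpha>(1)]] .
  moreover have "(\<alpha> has_sum 1) E"
    using prob_model_state_has_sum[OF A \<alpha>(1) E] .
  ultimately have "\<alpha> x + 1 \<le> 1"
    by (rule has_sum_mono_neutral)
      (use x \<open>a \<subseteq> E\<close> test_subset_X[OF E] prob_model_state_nonneg[OF A \<alpha>(1)] in auto)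
  then show False
    using \<alpha>(2) by simp
qed

theorem lemma1p23:
  fixes A :: "'a model" and B :: "'b model"
    and \<phi> :: "'a \<Rightarrow> 'b" and \<psi> :: "'b \<Rightarrow> 'a"
  assumes "prob_model A" and "prob_model B"
    and "embedding A B \<phi>"
    and "morphism B A \<psi>"
    and "\<forall>x\<in>X A. \<psi> (\<phi> x) = x"
  shows "test_preserving B A \<psi>"
  unfolding test_preserving_def
proof (intro conjI ballI)
  show "morphism B A \<psi>" by fact
  fix F assume F: "F \<in> tests B"
  obtain E where E: "E \<in> tests A" "\<psi> ` F \<subseteq> E"
    using morphism_image_test_subset_test[OF assms(4) F] .
  have "\<phi> ` E \<in> tests B"
    using assms(3) E(1) unfolding embedding_def test_preserving_def by blast
  moreover have "\<forall>x\<in>E. \<psi> (\<phi> x) = x"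
    using assms(5) test_subset_X[OF E(1)] by blast
  ultimately have "((\<alpha> \<circ> \<psi>) has_sum 1) F" if "\<alpha> \<in> states A" for \<alpha>
    using left_inverse_pullback_state_has_sum_one[OF assms(1,2,4) E(1)] F that by blast
  then have "(\<alpha> has_sum 1) (\<psi> ` F)" if "\<alpha> \<in> states A" for \<alpha>
    using has_sum_reindex[OF morphism_inj_on_test[OF assms(4) F]] that by blast
  then have "\<psi> ` F = E"
    using subset_test_eq_if_states_sum_one[OF assms(1) E] by blast
  then show "\<psi> ` F \<in> tests A"
    using E(1) by simp
qed

end
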